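(* Let $a,b,c,p\in\mathbb{C}$ with $-c\notin\mathbb{N}\cup\{0\}$. Define $(u_n)$ and $(v_n)$ by $u_0=1$, $u_1=\frac{ab}{c}+p$, $u_2=\frac{a(1+a)b(1+b)}{2c(1+c)}+\frac{abp}{c}+\frac{p^2}{2}$, $v_0=1$, $v_1=\frac{ab}{c}-p$, $v_2=\frac{a(1+a)b(1+b)}{2c(1+c)}-\frac{abp}{c}+\frac{p^2}{2}$, and for all integers $n\ge2$, \[ u_{n+1}=\frac{(a+n)(b+n)+p(c+2n)}{(n+1)(c+n)}u_n-\frac{p(a+b+2n+p-1)}{(n+1)(c+n)}u_{n-1}+\frac{p^2}{(n+1)(c+n)}u_{n-2}, \] \[ v_{n+1}=\frac{(a+n)(b+n)-p(c+2n)}{(n+1)(c+n)}v_n+\frac{p(a+b+2n-p-1)}{(n+1)(c+n)}v_{n-1}+\frac{p^2}{(n+1)(c+n)}v_{n-2}. \] Then \[ \cosh(pz)F(a,b;c;z)=\sum_{n=0}^\infty\frac{u_n+v_n}{2}z^n,\qquad |z|<1. \]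
   Context: For $a\in\mathbb{C}$, $(a)_n=a(a+1)\cdots(a+n-1)$ denotes the Pochhammer symbol, with $(a)_0=1$. For $a,b,c\in\mathbb{C}$ with $-c\notin\mathbb{N}\cup\{0\}$, the Gaussian hypergeometric function is $F(a,b;c;z)=\sum_{n=0}^\infty \frac{(a)_n(b)_n}{(c)_n\,n!}z^n$, $|z|<1$. *)

theory Defs
  imports "HOL-Analysis.Analysis"
begin

definition hypergeomF :: "complex \<Rightarrow> complex \<Rightarrow> complex \<Rightarrow> complex \<Rightarrow> complex" where
  "hypergeomF a b c z =
     (\<Sum>n. pochhammer a n * pochhammer b n / (pochhammer c n * fact n) * z ^ n)"

text \<open>The sequence u; the recursion clause for index n+3 is the paper's formula
  for u_{N+1} with N = n+2 (so N \<ge> 2).\<close>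
fun useq :: "complex \<Rightarrow> complex \<Rightarrow> complex \<Rightarrow> complex \<Rightarrow> nat \<Rightarrow> complex" where
  "useq a b c p 0 = 1"
| "useq a b c p (Suc 0) = a * b / c + p"
| "useq a b c p (Suc (Suc 0)) =
     a * (1 + a) * b * (1 + b) / (2 * c * (1 + c)) + a * b * p / c + p ^ 2 / 2"
| "useq a b c p (Suc (Suc (Suc n))) =
     (let N = of_nat (n + 2) :: complex in
       ((a + N) * (b + N) + p * (c + 2 * N)) / ((N + 1) * (c + N)) * useq a b c p (n + 2)
       - p * (a + b + 2 * N + p - 1) / ((N + 1) * (c + N)) * useq a b c p (n + 1)
       + p ^ 2 / ((N + 1) * (c + N)) * useq a b c p n)"

fun vseq :: "complex \<Rightarrow> complex \<Rightarrow> complex \<Rightarrow> complex \<Rightarrow> nat \<Rightarrow> complex" where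
  "vseq a b c p 0 = 1"
| "vseq a b c p (Suc 0) = a * b / c - p"
| "vseq a b c p (Suc (Suc 0)) =
     a * (1 + a) * b * (1 + b) / (2 * c * (1 + c)) - a * b * p / c + p ^ 2 / 2"
| "vseq a b c p (Suc (Suc (Suc n))) =
     (let N = of_nat (n + 2) :: complex in
       ((a + N) * (b + N) - p * (c + 2 * N)) / ((N + 1) * (c + N)) * vseq a b c p (n + 2)
       + p * (a + b + 2 * N - p - 1) / ((N + 1) * (c + N)) * vseq a b c p (n + 1)
       + p ^ 2 / ((N + 1) * (c + N)) * vseq a b c p n)"

end

theory Submission
  imports Defs
begin

(* The u_n are the Taylor coefficients of e^(pz) F(a,b;c;z).  F satisfies Gauss's equation
   z(1-z)F'' + (c-(a+b+1)z)F' - abF = 0, and since e^(pz) D = (D - p) e^(pz) for D = d/dz, the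
   product satisfies the same equation with D replaced by D - p; comparing coefficients of that
   equation gives exactly the three-term recurrence defining u_n.  The v_n are the u_n with p
   replaced by -p, so averaging the two convergent series yields cosh(pz) F(a,b;c;z). *)

definition hypergeom_fps :: "complex \<Rightarrow> complex \<Rightarrow> complex \<Rightarrow> complex fps" where
  "hypergeom_fps a b c =
     Abs_fps (\<lambda>n. pochhammer a n * pochhammer b n / (pochhammer c n * fact n))"

lemma hypergeom_fps_nth_Suc:
  assumes "\<forall>n::nat. c \<noteq> - of_nat n"
  shows "(of_nat n + 1) * (c + of_nat n) * fps_nth (hypergeom_fps a b c) (Suc n) =
           (a + of_nat n) * (b + of_nat n) * fps_nth (hypergeom_fps a b c) n"
proof -
  have "pochhammer c n \<noteq> 0"
    using assms by (auto simp: pochhammer_eq_0_iff)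
  moreover have "c + of_nat n \<noteq> 0"
    using assms eq_neg_iff_add_eq_0 by blast
  moreover have "(of_nat n + 1 :: complex) \<noteq> 0"
    by (metis of_nat_Suc of_nat_eq_0_iff nat.distinct(1) add.commute)
  ultimately show ?thesis
    by (simp add: hypergeom_fps_def pochhammer_rec' divide_simps) (simp add: algebra_simps)
qed

definition hypergeom_op ::
    "'a \<Rightarrow> 'a \<Rightarrow> 'a \<Rightarrow> ('a fps \<Rightarrow> 'a fps) \<Rightarrow> 'a::comm_ring_1 fps \<Rightarrow> 'a fps" where
  "hypergeom_op a b c D f =
     fps_X * (1 - fps_X) * D (D f) + (fps_const c - fps_const (a + b + 1) * fps_X) * D f
       - fps_const (a * b) * f"

lemma hypergeom_op_hypergeom_fps:
  assumes "\<forall>n::nat. c \<noteq> - of_nat n"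
  shows "hypergeom_op a b c fps_deriv (hypergeom_fps a b c) = 0"
proof (rule fps_ext)
  fix n
  show "fps_nth (hypergeom_op a b c fps_deriv (hypergeom_fps a b c)) n = fps_nth 0 n"
    using hypergeom_fps_nth_Suc[OF assms, of n a b]
    by (cases n) (auto simp: hypergeom_op_def algebra_simps)
qed

lemma hypergeom_op_exp_mult:
  fixes p :: "'a::field_char_0"
  shows "hypergeom_op a b c (\<lambda>g. fps_deriv g - fps_const p * g) (fps_exp p * f)
           = fps_exp p * hypergeom_op a b c fps_deriv f"
proof -
  have shift:
    "fps_deriv (fps_exp p * g) - fps_const p * (fps_exp p * g) = fps_exp p * fps_deriv g"
    for g :: "'a fps"
    by (simp add: algebra_simps)
  show ?thesis
    by (simp add: hypergeom_op_def shift algebra_simps)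
qed

lemma hypergeom_op_shift_nth:
  fixes g :: "'a::comm_ring_1 fps" and n :: nat
  defines "N \<equiv> of_nat (n + 2) :: 'a"
  shows "fps_nth (hypergeom_op a b c (\<lambda>g. fps_deriv g - fps_const p * g) g) (n + 2)
         = (N + 1) * (c + N) * fps_nth g (n + 3)
           - ((a + N) * (b + N) + p * (c + 2 * N)) * fps_nth g (n + 2)
           + p * (a + b + 2 * N + p - 1) * fps_nth g (n + 1) - p ^ 2 * fps_nth g n"
  by (simp add: hypergeom_op_def N_def algebra_simps power2_eq_square numeral_eq_Suc
      numeral_fps_const)

lemma exp_mult_hypergeom_fps_nth_rec:
  fixes a b c p :: complex and n :: nat
  assumes "\<forall>n::nat. c \<noteq> - of_nat n"
  defines "g \<equiv> fps_nth (fps_exp p * hypergeom_fps a b c)"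
    and "N \<equiv> of_nat (n + 2) :: complex"
  shows "(N + 1) * (c + N) * g (n + 3) =
           ((a + N) * (b + N) + p * (c + 2 * N)) * g (n + 2)
           - p * (a + b + 2 * N + p - 1) * g (n + 1) + p ^ 2 * g n"
proof -
  have "0 = (N + 1) * (c + N) * g (n + 3)
           - ((a + N) * (b + N) + p * (c + 2 * N)) * g (n + 2)
           + p * (a + b + 2 * N + p - 1) * g (n + 1) - p ^ 2 * g n"
    using hypergeom_op_shift_nth[of a b c p "fps_exp p * hypergeom_fps a b c" n]
    unfolding hypergeom_op_exp_mult hypergeom_op_hypergeom_fps[OF assms(1)] g_def N_def
    by simp
  then show ?thesis
    by (simp add: algebra_simps)
qed

lemma useq_eq_exp_mult_hypergeom_fps_nth:
  assumes "\<forall>n::nat. c \<noteq> - of_nat n"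
  shows "useq a b c p n = fps_nth (fps_exp p * hypergeom_fps a b c) n"
  using assms
proof (induction a b c p n rule: useq.induct)
  case (1 a b c p)
  then show ?case by (simp add: hypergeom_fps_def)
next
  case (2 a b c p)
  then show ?case by (simp add: hypergeom_fps_def fps_mult_nth)
next
  case (3 a b c p)
  have "c \<noteq> 0" "1 + c \<noteq> 0"
    using "3"[rule_format, of 0] "3"[rule_format, of 1] by (auto simp: add_eq_0_iff)
  then show ?case
    by (simp add: hypergeom_fps_def fps_mult_nth numeral_2_eq_2 pochhammer_Suc field_simps)
next
  case (4 a b c p n)
  define N where "N = (of_nat (n + 2) :: complex)"
  define g where "g = fps_nth (fps_exp p * hypergeom_fps a b c)"
  have "N + 1 \<noteq> 0" "c + N \<noteq> 0"
    using "4.prems"[rule_format, of "n + 2"] unfolding N_def eq_neg_iff_add_eq_0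
    by (metis of_nat_Suc of_nat_neq_0 add.commute, simp)
  have "useq a b c p (Suc (Suc (Suc n)))
      = (((a + N) * (b + N) + p * (c + 2 * N)) * g (n + 2)
           - p * (a + b + 2 * N + p - 1) * g (n + 1) + p ^ 2 * g n) / ((N + 1) * (c + N))"
    unfolding useq.simps Let_def N_def[symmetric] "4.IH"[OF refl "4.prems"] g_def
    by (simp only: times_divide_eq_left) (simp only: add_divide_distrib diff_divide_distrib)
  also have "\<dots> = g (n + 3)"
    using \<open>N + 1 \<noteq> 0\<close> \<open>c + N \<noteq> 0\<close>
    unfolding exp_mult_hypergeom_fps_nth_rec[OF "4.prems", where a = a and b = b and p = p
      and n = n, folded g_def N_def, symmetric]
    by simp
  finally show ?case
    by (simp add: g_def numeral_3_eq_3)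
qed

lemma vseq_eq_useq_uminus: "vseq a b c p n = useq a b c (- p) n"
  by (induction a b c p n rule: vseq.induct) (simp_all add: Let_def)

lemma LIMSEQ_add_of_nat_divide_add_of_nat:
  fixes x y :: "'a::real_normed_field"
  shows "(\<lambda>n. (x + of_nat n) / (y + of_nat n)) \<longlonglongrightarrow> 1"
proof -
  have "(\<lambda>n. (x / of_nat n + 1) / (y / of_nat n + 1)) \<longlonglongrightarrow> (0 + 1) / (0 + 1)"
    by (intro tendsto_intros) auto
  moreover have "eventually (\<lambda>n. (x / of_nat n + 1) / (y / of_nat n + 1)
                                   = (x + of_nat n) / (y + of_nat n)) sequentially"
    using eventually_gt_at_top[of 0] by eventually_elim (simp add: divide_simps)
  ultimately show ?thesis
    by (simp add: Lim_transform_eventually)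
qed

lemma fps_conv_radius_hypergeom_fps:
  assumes "\<forall>n::nat. c \<noteq> - of_nat n"
  shows "1 \<le> fps_conv_radius (hypergeom_fps a b c)"
  unfolding fps_conv_radius_def
proof (rule conv_radius_geI_ex')
  fix r :: real
  assume r: "0 < r" "ereal r < 1"
  define h where "h = fps_nth (hypergeom_fps a b c)"
  define q where "q n = (a + of_nat n) / (1 + of_nat n) * ((b + of_nat n) / (c + of_nat n))" for n
  define K where "K = (1 + r) / 2"
  have "K < 1" "r < K"
    using r by (auto simp: K_def)
  have "h (Suc n) = q n * h n" for n
  proof -
    have "(of_nat n + 1 :: complex) \<noteq> 0" "c + of_nat n \<noteq> 0"
      using assms eq_neg_iff_add_eq_0 by (metis of_nat_Suc of_nat_neq_0 add.commute, blast)
    then have "h (Suc n)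
        = (a + of_nat n) * (b + of_nat n) * h n / ((of_nat n + 1) * (c + of_nat n))"
      using hypergeom_fps_nth_Suc[OF assms, of n a b] by (simp add: h_def eq_divide_eq mult_ac)
    then show ?thesis
      by (simp add: q_def add.commute)
  qed
  have "q \<longlonglongrightarrow> 1 * 1"
    unfolding q_def by (intro tendsto_mult LIMSEQ_add_of_nat_divide_add_of_nat)
  then have "(\<lambda>n. norm (q n) * r) \<longlonglongrightarrow> norm (1 * 1 :: complex) * r"
    by (intro tendsto_intros)
  then have "eventually (\<lambda>n. norm (q n) * r < K) sequentially"
    using \<open>r < K\<close> by (intro order_tendstoD(2)) auto
  then obtain N where N: "\<And>n. n \<ge> N \<Longrightarrow> norm (q n) * r < K"
    by (auto simp: eventually_sequentially)
  show "summable (\<lambda>n. fps_nth (hypergeom_fps a b c) n * of_real r ^ n)"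
    unfolding h_def[symmetric]
  proof (rule summable_norm_cancel, rule summable_ratio_test[OF \<open>K < 1\<close>, of N])
    fix n assume "N \<le> n"
    have "norm (norm (h (Suc n) * of_real r ^ Suc n))
          = norm (q n) * r * norm (h n * of_real r ^ n)"
      using r \<open>h (Suc n) = q n * h n\<close> by (simp add: norm_mult norm_power mult_ac)
    also have "\<dots> \<le> K * norm (norm (h n * of_real r ^ n))"
      using N[OF \<open>N \<le> n\<close>] by (simp add: mult_right_mono)
    finally show "norm (norm (h (Suc n) * of_real r ^ Suc n))
                    \<le> K * norm (norm (h n * of_real r ^ n))" .
  qed
qed

lemma eval_fps_hypergeom_fps: "eval_fps (hypergeom_fps a b c) z = hypergeomF a b c z"
  by (simp add: eval_fps_def hypergeom_fps_def hypergeomF_def)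

lemma useq_sums:
  assumes "\<forall>n::nat. c \<noteq> - of_nat n" and "norm z < 1"
  shows "(\<lambda>n. useq a b c p n * z ^ n) sums (exp (p * z) * hypergeomF a b c z)"
proof -
  have "ereal (norm z) < 1"
    using assms(2) by simp
  then have F: "norm z < fps_conv_radius (hypergeom_fps a b c)"
    using fps_conv_radius_hypergeom_fps[OF assms(1)] by (rule less_le_trans)
  then have "norm z < fps_conv_radius (fps_exp p * hypergeom_fps a b c)"
    using fps_conv_radius_mult[of "fps_exp p" "hypergeom_fps a b c"] by (simp add: less_le_trans)
  then have "(\<lambda>n. fps_nth (fps_exp p * hypergeom_fps a b c) n * z ^ n)
               sums eval_fps (fps_exp p * hypergeom_fps a b c) z"
    by (rule sums_eval_fps)
  also have "eval_fps (fps_exp p * hypergeom_fps a b c) z = exp (p * z) * hypergeomF a b c z"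
    using F by (simp add: eval_fps_mult eval_fps_hypergeom_fps)
  finally show ?thesis
    by (simp add: useq_eq_exp_mult_hypergeom_fps_nth[OF assms(1)])
qed

theorem theorem3p3:
  fixes a b c p z :: complex
  assumes "\<forall>n::nat. c \<noteq> - of_nat n"
    and "norm z < 1"
  shows "(\<lambda>n. (useq a b c p n + vseq a b c p n) / 2 * z ^ n)
           sums (cosh (p * z) * hypergeomF a b c z)"
proof -
  have "(\<lambda>n. (useq a b c p n * z ^ n + useq a b c (- p) n * z ^ n) / 2)
          sums ((exp (p * z) * hypergeomF a b c z + exp (- p * z) * hypergeomF a b c z) / 2)"
    by (intro sums_divide sums_add useq_sums assms)
  then show ?thesis
    by (simp add: vseq_eq_useq_uminus cosh_def scaleR_conv_of_real field_simps)
qed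

end
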